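(* For all $n\ge 1$, $\left|\mathrm{Av}_n[\overline{14}32]\right|=C_{n-1}$, where $C_m=\frac{1}{m+1}\binom{2m}{m}$ is the $m$th Catalan number.
   Context: For $\sigma\in S_n$, the cyclic permutation $[\sigma]$ is the set of all rotations of $\sigma$; $[S_n]$ is the set of cyclic permutations of length $n$. $[\sigma]$ contains the vincular pattern $[\overline{14}32]$ if some rotation of $\sigma$ has entries $a,b,c,d$ appearing in this order with $a,b$ adjacent and $a<d<c<b$; $\mathrm{Av}_n[\overline{14}32]$ is the set of $[\sigma]\in[S_n]$ not containing it. *)

theory Defs
  imports Complex_Main
begin

definition perms :: "nat \<Rightarrow> nat list set" where
  "perms n = {xs. distinct xs \<and> set xs = {1..n}}"

text \<open>The cyclic permutation [sigma]: the set of all rotations of sigma.\<close>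
definition cyc :: "nat list \<Rightarrow> nat list set" where
  "cyc xs = {rotate k xs | k. k < length xs}"

definition cyc_perms :: "nat \<Rightarrow> nat list set set" where
  "cyc_perms n = cyc ` perms n"

text \<open>A linear word contains the vincular pattern 14-32 (1 and 4 adjacent):
  entries a,b,c,d at positions i, i+1 < j < k with a < d < c < b.\<close>
definition contains_1432 :: "nat list \<Rightarrow> bool" where
  "contains_1432 xs \<longleftrightarrow> (\<exists>i j k. i + 1 < j \<and> j < k \<and> k < length xs \<and>
      xs ! i < xs ! k \<and> xs ! k < xs ! j \<and> xs ! j < xs ! (i + 1))"

definition cyc_contains_1432 :: "nat list set \<Rightarrow> bool" where
  "cyc_contains_1432 C \<longleftrightarrow> (\<exists>xs\<in>C. contains_1432 xs)"

definition Av_1432 :: "nat \<Rightarrow> nat list set set" where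
  "Av_1432 n = {C \<in> cyc_perms n. \<not> cyc_contains_1432 C}"

definition catalan :: "nat \<Rightarrow> real" where
  "catalan m = 1 / (real m + 1) * real ((2 * m) choose m)"

end

theory Submission
  imports Defs
begin

(* Rotate every cyclic permutation so that it starts with 1.  Read around the cycle, the
  pattern is a cyclic ascent a b followed by c and d with a < d < c < b.  Deleting the largest
  entry n + 1 of an avoider leaves an avoider, and n + 1 can be put back right after u without
  creating the pattern exactly when u is active: all entries above u follow u, going round the
  cycle, in increasing order.  The active entries of an avoider form a final segment {v..n};
  inserting after u < n turns it into {u+1..n+1}, inserting after n into {v..n+1}.  So the
  number A(n, v) of avoiders in which v is active satisfies the ballot recursion
  A(n+1, v) = A(n+1, v-1) + A(n, v), and the diagonal A(n, n), which counts all avoiders,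
  is the Catalan number C(n-1). *)

section \<open>Cyclic order in lists\<close>

fun precedes :: "'a list \<Rightarrow> 'a \<Rightarrow> 'a \<Rightarrow> bool" where
  "precedes [] a b = False"
| "precedes (x # xs) a b = ((a = x \<and> b \<in> set xs) \<or> precedes xs a b)"

lemma precedes_in_set: "precedes xs a b \<Longrightarrow> a \<in> set xs \<and> b \<in> set xs"
  by (induct xs) auto

lemma precedes_asym: "distinct xs \<Longrightarrow> precedes xs a b \<Longrightarrow> \<not> precedes xs b a"
  by (induct xs) (auto dest: precedes_in_set)

lemma precedes_irrefl: "distinct xs \<Longrightarrow> \<not> precedes xs a a"
  by (induct xs) (auto dest: precedes_in_set)

lemma precedes_total:
  "a \<in> set xs \<Longrightarrow> b \<in> set xs \<Longrightarrow> a \<noteq> b \<Longrightarrow> precedes xs a b \<or> precedes xs b a"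
  by (induct xs) auto

lemma precedes_trans: "distinct xs \<Longrightarrow> precedes xs a b \<Longrightarrow> precedes xs b c \<Longrightarrow> precedes xs a c"
  by (induct xs) (auto dest: precedes_in_set)

lemma precedes_append:
  "precedes (xs @ ys) a b \<longleftrightarrow> precedes xs a b \<or> precedes ys a b \<or> (a \<in> set xs \<and> b \<in> set ys)"
  by (induct xs) auto

lemma precedes_removeAll: "precedes (removeAll e xs) a b \<longleftrightarrow> a \<noteq> e \<and> b \<noteq> e \<and> precedes xs a b"
  by (induct xs) auto

lemma precedes_nth:
  "distinct xs \<Longrightarrow> i < length xs \<Longrightarrow> j < length xs \<Longrightarrow> precedes xs (xs ! i) (xs ! j) \<longleftrightarrow> i < j"
proof (induct xs arbitrary: i j)
  case (Cons x xs)
  then show ?case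
    by (cases i; cases j) (auto simp: nth_eq_iff_index_eq dest: precedes_in_set)
qed simp

definition cyc_ordered :: "'a list \<Rightarrow> 'a \<Rightarrow> 'a \<Rightarrow> 'a \<Rightarrow> bool" where
  "cyc_ordered xs a b c \<longleftrightarrow>
     (precedes xs a b \<and> precedes xs b c) \<or> (precedes xs b c \<and> precedes xs c a) \<or>
     (precedes xs c a \<and> precedes xs a b)"

lemma cyc_ordered_shift: "cyc_ordered xs a b c \<Longrightarrow> cyc_ordered xs b c a"
  unfolding cyc_ordered_def by blast

lemma cyc_ordered_in_set: "cyc_ordered xs a b c \<Longrightarrow> a \<in> set xs \<and> b \<in> set xs \<and> c \<in> set xs"
  unfolding cyc_ordered_def by (auto dest: precedes_in_set)

lemma cyc_ordered_asym: "distinct xs \<Longrightarrow> cyc_ordered xs a b c \<Longrightarrow> \<not> cyc_ordered xs a c b"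
  unfolding cyc_ordered_def by (meson precedes_asym precedes_trans)

lemma cyc_ordered_distinct: "distinct xs \<Longrightarrow> cyc_ordered xs a b c \<Longrightarrow> a \<noteq> b \<and> b \<noteq> c \<and> a \<noteq> c"
  unfolding cyc_ordered_def by (meson precedes_asym precedes_trans)

lemma cyc_ordered_total:
  "a \<in> set xs \<Longrightarrow> b \<in> set xs \<Longrightarrow> c \<in> set xs \<Longrightarrow> a \<noteq> b \<Longrightarrow> b \<noteq> c \<Longrightarrow> a \<noteq> c \<Longrightarrow>
   cyc_ordered xs a b c \<or> cyc_ordered xs a c b"
  unfolding cyc_ordered_def by (meson precedes_total)

lemma cyc_ordered_trans:
  "distinct xs \<Longrightarrow> cyc_ordered xs v w x \<Longrightarrow> cyc_ordered xs v x y \<Longrightarrow> cyc_ordered xs w x y"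
  unfolding cyc_ordered_def by (meson precedes_asym precedes_trans precedes_total precedes_in_set)

lemma cyc_ordered_rotate1: "distinct xs \<Longrightarrow> cyc_ordered (rotate1 xs) a b c \<longleftrightarrow> cyc_ordered xs a b c"
  by (cases xs) (auto simp: cyc_ordered_def precedes_append dest: precedes_in_set)

lemma cyc_ordered_rotate: "distinct xs \<Longrightarrow> cyc_ordered (rotate k xs) a b c \<longleftrightarrow> cyc_ordered xs a b c"
  by (induct k) (auto simp: cyc_ordered_rotate1)

lemma cyc_ordered_nth:
  "distinct xs \<Longrightarrow> i < length xs \<Longrightarrow> j < length xs \<Longrightarrow> k < length xs \<Longrightarrow>
   cyc_ordered xs (xs ! i) (xs ! j) (xs ! k) \<longleftrightarrow> (i < j \<and> j < k) \<or> (j < k \<and> k < i) \<or> (k < i \<and> i < j)"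
  unfolding cyc_ordered_def by (simp add: precedes_nth)

fun insert_after :: "'a \<Rightarrow> 'a \<Rightarrow> 'a list \<Rightarrow> 'a list" where
  "insert_after u e [] = []"
| "insert_after u e (x # xs) = (if x = u then x # e # xs else x # insert_after u e xs)"

lemma set_insert_after: "u \<in> set xs \<Longrightarrow> set (insert_after u e xs) = insert e (set xs)"
  by (induct xs) auto

lemma distinct_insert_after:
  "distinct xs \<Longrightarrow> e \<notin> set xs \<Longrightarrow> u \<in> set xs \<Longrightarrow> distinct (insert_after u e xs)"
  by (induct xs) (auto simp: set_insert_after)

lemma removeAll_insert_after: "e \<notin> set xs \<Longrightarrow> removeAll e (insert_after u e xs) = xs"
  by (induct xs) auto

lemma hd_insert_after: "xs \<noteq> [] \<Longrightarrow> hd (insert_after u e xs) = hd xs"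
  by (cases xs) auto

lemma insert_after_append: "u \<notin> set xs \<Longrightarrow> insert_after u e (xs @ ys) = xs @ insert_after u e ys"
  by (induct xs) auto

lemma insert_after_removeAll:
  assumes "distinct xs" "e \<in> set xs" "hd xs \<noteq> e"
  shows "\<exists>u\<in>set (removeAll e xs). xs = insert_after u e (removeAll e xs)"
proof -
  obtain ys zs where "xs = ys @ e # zs" using \<open>e \<in> set xs\<close> split_list by metis
  moreover have "ys \<noteq> []" using \<open>hd xs \<noteq> e\<close> calculation by auto
  ultimately obtain ys' u where xs: "xs = ys' @ u # e # zs"
    by (metis append.assoc append_Cons append_Nil rev_exhaust)
  with \<open>distinct xs\<close> have "removeAll e xs = ys' @ u # zs" "u \<notin> set ys'"
    by auto
  with xs show ?thesis by (auto simp: insert_after_append)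
qed

lemma precedes_insert_after_old:
  "a \<noteq> e \<Longrightarrow> b \<noteq> e \<Longrightarrow> e \<notin> set xs \<Longrightarrow> precedes (insert_after u e xs) a b \<longleftrightarrow> precedes xs a b"
  by (metis precedes_removeAll removeAll_insert_after)

lemma precedes_insert_after_to_new:
  "distinct xs \<Longrightarrow> e \<notin> set xs \<Longrightarrow> u \<in> set xs \<Longrightarrow> x \<noteq> e \<Longrightarrow>
   precedes (insert_after u e xs) x e \<longleftrightarrow> x = u \<or> precedes xs x u"
  by (induct xs) (auto simp: set_insert_after dest: precedes_in_set)

lemma precedes_insert_after_from_new:
  "distinct xs \<Longrightarrow> e \<notin> set xs \<Longrightarrow> u \<in> set xs \<Longrightarrow>
   precedes (insert_after u e xs) e y \<longleftrightarrow> y \<noteq> e \<and> precedes xs u y"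
  by (induct xs) (auto simp: set_insert_after dest: precedes_in_set)

lemma cyc_ordered_insert_after_old:
  "a \<noteq> e \<Longrightarrow> b \<noteq> e \<Longrightarrow> c \<noteq> e \<Longrightarrow> e \<notin> set xs \<Longrightarrow>
   cyc_ordered (insert_after u e xs) a b c \<longleftrightarrow> cyc_ordered xs a b c"
  unfolding cyc_ordered_def by (simp add: precedes_insert_after_old)

lemma cyc_ordered_insert_after_new:
  assumes "distinct xs" "e \<notin> set xs" "u \<in> set xs" "v \<in> set xs" "x \<in> set xs" "v \<noteq> x"
  shows "cyc_ordered (insert_after u e xs) v x e \<longleftrightarrow> v \<noteq> u \<and> (x = u \<or> cyc_ordered xs v x u)"
proof -
  have "v \<noteq> e" "x \<noteq> e" using assms by auto
  with assms have "cyc_ordered (insert_after u e xs) v x e \<longleftrightarrow>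
      (precedes xs v x \<and> (x = u \<or> precedes xs x u)) \<or> ((x = u \<or> precedes xs x u) \<and> precedes xs u v) \<or>
      (precedes xs u v \<and> precedes xs v x)"
    unfolding cyc_ordered_def
    by (simp add: precedes_insert_after_old precedes_insert_after_to_new precedes_insert_after_from_new)
  also have "\<dots> \<longleftrightarrow> v \<noteq> u \<and> (x = u \<or> cyc_ordered xs v x u)"
    unfolding cyc_ordered_def using assms by (metis precedes_asym precedes_irrefl precedes_total)
  finally show ?thesis .
qed

section \<open>Avoidance and insertion of a new maximum\<close>

definition cyc_succ :: "'a list \<Rightarrow> 'a \<Rightarrow> 'a \<Rightarrow> bool" where
  "cyc_succ xs a b \<longleftrightarrow>
     a \<in> set xs \<and> b \<in> set xs \<and> a \<noteq> b \<and> (\<forall>z\<in>set xs. \<not> cyc_ordered xs a z b)"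

definition cyc_avoids_1432 :: "'a::linorder list \<Rightarrow> bool" where
  "cyc_avoids_1432 xs \<longleftrightarrow>
     \<not> (\<exists>a b c d. cyc_succ xs a b \<and> cyc_ordered xs a c d \<and> a < d \<and> d < c \<and> c < b)"

definition active :: "'a::linorder list \<Rightarrow> 'a \<Rightarrow> bool" where
  "active xs v \<longleftrightarrow> (\<forall>x\<in>set xs. \<forall>y\<in>set xs. v < x \<longrightarrow> x < y \<longrightarrow> cyc_ordered xs v x y)"

lemma active_mono: "distinct xs \<Longrightarrow> active xs v \<Longrightarrow> v \<le> w \<Longrightarrow> w \<in> set xs \<Longrightarrow> active xs w"
  unfolding active_def by (metis cyc_ordered_trans le_less less_trans)

locale max_insertion =
  fixes r :: "'a::linorder list" and u e :: 'a
  assumes distinct_r: "distinct r" and u_in_r: "u \<in> set r" and less_e: "\<And>x. x \<in> set r \<Longrightarrow> x < e"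
begin

abbreviation s :: "'a list" where "s \<equiv> insert_after u e r"

lemma e_notin_r: "e \<notin> set r"
  using less_e by blast

lemma distinct_s: "distinct s"
  by (rule distinct_insert_after[OF distinct_r e_notin_r u_in_r])

lemma set_s: "set s = insert e (set r)"
  by (rule set_insert_after[OF u_in_r])

lemma cyc_ordered_s_iff:
  "a \<noteq> e \<Longrightarrow> b \<noteq> e \<Longrightarrow> c \<noteq> e \<Longrightarrow> cyc_ordered s a b c \<longleftrightarrow> cyc_ordered r a b c"
  by (rule cyc_ordered_insert_after_old[OF _ _ _ e_notin_r])

lemma cyc_succ_u_e: "cyc_succ s u e"
  unfolding cyc_succ_def
proof (intro conjI ballI)
  show "u \<in> set s" "e \<in> set s" "u \<noteq> e" using set_s u_in_r e_notin_r by auto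
  fix z assume z: "z \<in> set s"
  show "\<not> cyc_ordered s u z e"
  proof
    assume uze: "cyc_ordered s u z e"
    then have "z \<noteq> e" "z \<noteq> u" using cyc_ordered_distinct[OF distinct_s] by auto
    with z set_s have "z \<in> set r" by auto
    with uze \<open>z \<noteq> u\<close> show False
      using cyc_ordered_insert_after_new[OF distinct_r e_notin_r u_in_r u_in_r] by auto
  qed
qed

lemma cyc_succ_to_e: "cyc_succ s a e \<Longrightarrow> a = u"
proof (rule ccontr)
  assume ae: "cyc_succ s a e" and "a \<noteq> u"
  then have "a \<in> set r" using set_s unfolding cyc_succ_def by auto
  with \<open>a \<noteq> u\<close> have "cyc_ordered s a u e"
    using cyc_ordered_insert_after_new[OF distinct_r e_notin_r u_in_r _ u_in_r] by auto
  with ae u_in_r set_s show False unfolding cyc_succ_def by auto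
qed

lemma cyc_succ_remove_e: "a \<noteq> e \<Longrightarrow> b \<noteq> e \<Longrightarrow> cyc_succ s a b \<Longrightarrow> cyc_succ r a b"
  using set_s e_notin_r cyc_ordered_s_iff
  unfolding cyc_succ_def by (metis insert_iff)

lemma cyc_succ_insert_e: "a \<noteq> u \<Longrightarrow> cyc_succ r a b \<Longrightarrow> cyc_succ s a b"
  unfolding cyc_succ_def
proof (elim conjE, intro conjI ballI)
  assume "a \<noteq> u" and ab: "a \<in> set r" "b \<in> set r" "a \<noteq> b"
    and gap: "\<forall>z\<in>set r. \<not> cyc_ordered r a z b"
  show "a \<in> set s" "b \<in> set s" "a \<noteq> b" using ab set_s by auto
  fix z assume "z \<in> set s"
  show "\<not> cyc_ordered s a z b"
  proof
    assume azb: "cyc_ordered s a z b"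
    show False
    proof (cases "z = e")
      case True
      with azb have "cyc_ordered s b a e" by (blast intro: cyc_ordered_shift)
      with ab \<open>a \<noteq> u\<close> have "cyc_ordered r a u b"
        using cyc_ordered_insert_after_new[OF distinct_r e_notin_r u_in_r ab(2) ab(1)]
        by (auto intro: cyc_ordered_shift)
      with gap u_in_r show False by blast
    next
      case False
      with azb ab e_notin_r have "cyc_ordered r a z b"
        by (metis cyc_ordered_s_iff)
      with gap \<open>z \<in> set s\<close> set_s False show False by auto
    qed
  qed
qed

lemma cyc_avoids_1432_sD:
  assumes avoid_s: "cyc_avoids_1432 s"
  shows "cyc_avoids_1432 r \<and> active r u"
proof -
  have "\<not> cyc_ordered s u c d" if "u < d" "d < c" "c < e" for c d
    using avoid_s cyc_succ_u_e that unfolding cyc_avoids_1432_def by blast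
  then have no_pattern_after_u: "\<not> cyc_ordered r u c d" if "c \<in> set r" "u < d" "d < c" for c d
    using that less_e e_notin_r cyc_ordered_s_iff by (metis cyc_ordered_in_set)
  show "cyc_avoids_1432 r \<and> active r u"
  proof
    show "cyc_avoids_1432 r"
      unfolding cyc_avoids_1432_def
    proof (intro notI, elim exE conjE)
      fix a b c d assume pattern: "cyc_succ r a b" "cyc_ordered r a c d" "a < d" "d < c" "c < b"
      then have "c \<in> set r" "cyc_ordered s a c d"
        using cyc_ordered_in_set[OF pattern(2)] e_notin_r cyc_ordered_s_iff by metis+
      show False
      proof (cases "a = u")
        case True
        with pattern \<open>c \<in> set r\<close> no_pattern_after_u show False by blast
      next
        case False
        with avoid_s pattern \<open>cyc_ordered s a c d\<close> show False
          using cyc_succ_insert_e unfolding cyc_avoids_1432_def by blast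
      qed
    qed
    show "active r u"
      unfolding active_def
    proof (intro ballI impI)
      fix x y assume xy: "x \<in> set r" "y \<in> set r" "u < x" "x < y"
      with no_pattern_after_u[of y x] show "cyc_ordered r u x y"
        using cyc_ordered_total[OF u_in_r xy(1) xy(2)] by auto
    qed
  qed
qed

lemma cyc_avoids_1432_sI:
  assumes avoid_r: "cyc_avoids_1432 r" and active_u: "active r u"
  shows "cyc_avoids_1432 s"
  unfolding cyc_avoids_1432_def
proof (intro notI, elim exE conjE)
  fix a b c d assume pattern: "cyc_succ s a b" "cyc_ordered s a c d" "a < d" "d < c" "c < b"
  have "b \<in> set s" using pattern(1) unfolding cyc_succ_def by auto
  then have "b \<le> e" using set_s less_e by fastforce
  with pattern have "c \<noteq> e" "d \<noteq> e" by auto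
  with pattern(2) have cd: "c \<in> set r" "d \<in> set r"
    using cyc_ordered_in_set[OF pattern(2)] set_s by auto
  show False
  proof (cases "b = e")
    case True
    with pattern(1) have "a = u" by (simp add: cyc_succ_to_e)
    with pattern \<open>c \<noteq> e\<close> \<open>d \<noteq> e\<close> have "cyc_ordered r u c d"
      using e_notin_r cyc_ordered_s_iff u_in_r by metis
    moreover have "cyc_ordered r u d c"
      using active_u cd pattern \<open>a = u\<close> unfolding active_def by auto
    ultimately show False using cyc_ordered_asym[OF distinct_r] by blast
  next
    case False
    with pattern \<open>b \<le> e\<close> have "a \<noteq> e" by auto
    with pattern False \<open>c \<noteq> e\<close> \<open>d \<noteq> e\<close> have "cyc_succ r a b" "cyc_ordered r a c d"
      using cyc_succ_remove_e cyc_ordered_s_iff by auto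
    with avoid_r pattern show False unfolding cyc_avoids_1432_def by blast
  qed
qed

lemma cyc_avoids_1432_s_iff: "cyc_avoids_1432 s \<longleftrightarrow> cyc_avoids_1432 r \<and> active r u"
  using cyc_avoids_1432_sD cyc_avoids_1432_sI by blast

lemma active_s_iff:
  assumes "w \<in> set r"
  shows "active s w \<longleftrightarrow>
    active r w \<and> (\<forall>x\<in>set r. w < x \<longrightarrow> w \<noteq> u \<and> (x = u \<or> cyc_ordered r w x u))"
proof -
  have "w \<noteq> e" using assms e_notin_r by auto
  have to_e: "cyc_ordered s w x e \<longleftrightarrow> w \<noteq> u \<and> (x = u \<or> cyc_ordered r w x u)"
    if "x \<in> set r" "w < x" for x
    using cyc_ordered_insert_after_new[OF distinct_r e_notin_r u_in_r assms that(1)] that by simp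
  have old: "cyc_ordered s w x y \<longleftrightarrow> cyc_ordered r w x y" if "x \<in> set r" "y \<in> set r" for x y
    using that e_notin_r \<open>w \<noteq> e\<close> cyc_ordered_s_iff by metis
  have "active s w \<longleftrightarrow> active r w \<and> (\<forall>x\<in>set r. w < x \<longrightarrow> cyc_ordered s w x e)"
    unfolding active_def set_s using less_e by (auto simp: old dest: less_e less_asym)
  then show ?thesis using to_e by auto
qed

lemma active_s_iff_max:
  assumes active_u: "active r u" and "w \<in> set r" and m: "m \<in> set r" "\<And>x. x \<in> set r \<Longrightarrow> x \<le> m"
  shows "active s w \<longleftrightarrow> active r w \<and> (u = m \<or> u < w)"
proof (cases "u = m")
  case True
  have "w \<noteq> m \<and> (x = m \<or> cyc_ordered r w x m)" if "active r w" "x \<in> set r" "w < x" for x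
    using that m unfolding active_def by (metis le_less not_le)
  with True show ?thesis using active_s_iff[OF \<open>w \<in> set r\<close>] by auto
next
  case False
  with m(2)[OF u_in_r] have "u < m" by simp
  show ?thesis
  proof
    assume "active s w"
    then have active_w: "active r w"
      and after_w: "\<forall>x\<in>set r. w < x \<longrightarrow> w \<noteq> u \<and> (x = u \<or> cyc_ordered r w x u)"
      using active_s_iff[OF \<open>w \<in> set r\<close>] by auto
    have "u < w"
    proof (rule ccontr)
      assume "\<not> u < w"
      with \<open>u < m\<close> after_w m False have "w < u" "cyc_ordered r w m u" by auto
      moreover have "cyc_ordered r w u m"
        using active_w \<open>w < u\<close> \<open>u < m\<close> u_in_r m unfolding active_def by auto
      ultimately show False using cyc_ordered_asym[OF distinct_r] by blast
    qed
    with active_w show "active r w \<and> (u = m \<or> u < w)" by simp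
  next
    assume "active r w \<and> (u = m \<or> u < w)"
    with False have "active r w" "u < w" by auto
    moreover have "cyc_ordered r w x u" if "x \<in> set r" "w < x" for x
      using active_u \<open>u < w\<close> that \<open>w \<in> set r\<close> unfolding active_def
      by (blast intro: cyc_ordered_shift)
    ultimately show "active s w" using active_s_iff[OF \<open>w \<in> set r\<close>] by auto
  qed
qed

end

section \<open>Cyclic classes and rooted representatives\<close>

lemma cyc_avoids_1432_rotate: "distinct xs \<Longrightarrow> cyc_avoids_1432 (rotate k xs) \<longleftrightarrow> cyc_avoids_1432 xs"
  unfolding cyc_avoids_1432_def cyc_succ_def by (simp add: cyc_ordered_rotate)

lemma cyc_succ_Cons_hd: "distinct (a # xs) \<Longrightarrow> cyc_succ (a # xs) a b \<Longrightarrow> xs \<noteq> [] \<and> b = hd xs"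
  by (cases xs) (auto simp: cyc_succ_def cyc_ordered_def)

lemma not_cyc_avoids_1432_if_contains_1432:
  assumes "distinct xs" "contains_1432 xs"
  shows "\<not> cyc_avoids_1432 xs"
proof -
  obtain i j k where ijk: "i + 1 < j" "j < k" "k < length xs"
    and pattern: "xs ! i < xs ! k" "xs ! k < xs ! j" "xs ! j < xs ! (i + 1)"
    using \<open>contains_1432 xs\<close> unfolding contains_1432_def by blast
  have "cyc_succ xs (xs ! i) (xs ! (i + 1))"
    unfolding cyc_succ_def
  proof (intro conjI ballI)
    show "xs ! i \<in> set xs" "xs ! (i + 1) \<in> set xs" "xs ! i \<noteq> xs ! (i + 1)"
      using ijk pattern by auto
    fix z assume "z \<in> set xs"
    then obtain l where "l < length xs" "z = xs ! l" by (auto simp: in_set_conv_nth)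
    then show "\<not> cyc_ordered xs (xs ! i) z (xs ! (i + 1))"
      using cyc_ordered_nth[OF \<open>distinct xs\<close>, of i l "i + 1"] ijk by auto
  qed
  moreover have "cyc_ordered xs (xs ! i) (xs ! j) (xs ! k)"
    using cyc_ordered_nth[OF \<open>distinct xs\<close>, of i j k] ijk by auto
  ultimately show ?thesis using pattern unfolding cyc_avoids_1432_def by blast
qed

lemma rotation_contains_1432_if_not_cyc_avoids:
  assumes "distinct xs" "\<not> cyc_avoids_1432 xs"
  shows "\<exists>ys\<in>cyc xs. contains_1432 ys"
proof -
  obtain a b c d where succ: "cyc_succ xs a b" and acd: "cyc_ordered xs a c d"
    and pattern: "a < d" "d < c" "c < b"
    using assms(2) unfolding cyc_avoids_1432_def by blast
  from succ obtain i where i: "i < length xs" "xs ! i = a"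
    unfolding cyc_succ_def by (auto simp: in_set_conv_nth)
  define ys where "ys = rotate i xs"
  have "ys \<in> cyc xs" unfolding ys_def cyc_def using i by blast
  have "distinct ys" using assms(1) unfolding ys_def by simp
  have "hd ys = a" using i hd_rotate_conv_nth[of xs i] unfolding ys_def by force
  moreover have "ys \<noteq> []" using i unfolding ys_def by auto
  ultimately obtain t where ys: "ys = a # t" by (metis list.collapse)
  have "cyc_succ ys a b" "cyc_ordered ys a c d"
    using succ acd assms(1) unfolding ys_def cyc_succ_def by (simp_all add: cyc_ordered_rotate)
  then have "ys ! 1 = b"
    using cyc_succ_Cons_hd[of a t b] \<open>distinct ys\<close> unfolding ys by (simp add: hd_conv_nth)
  obtain j k where jk: "j < length ys" "ys ! j = c" "k < length ys" "ys ! k = d"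
    using cyc_ordered_in_set[OF \<open>cyc_ordered ys a c d\<close>] by (auto simp: in_set_conv_nth)
  with \<open>cyc_ordered ys a c d\<close> have "0 < j" "j < k"
    using cyc_ordered_nth[OF \<open>distinct ys\<close>, of 0 j k] unfolding ys by auto
  moreover have "j \<noteq> 1" using \<open>ys ! 1 = b\<close> jk pattern by auto
  ultimately have "contains_1432 ys"
    unfolding contains_1432_def using jk pattern \<open>ys ! 1 = b\<close> ys
    by (intro exI[of _ 0] exI[of _ j] exI[of _ k]) auto
  with \<open>ys \<in> cyc xs\<close> show ?thesis by blast
qed

lemma cyc_contains_1432_iff:
  assumes "distinct xs"
  shows "cyc_contains_1432 (cyc xs) \<longleftrightarrow> \<not> cyc_avoids_1432 xs"
proof
  assume "cyc_contains_1432 (cyc xs)"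
  then obtain k where "contains_1432 (rotate k xs)"
    unfolding cyc_contains_1432_def cyc_def by blast
  with assms show "\<not> cyc_avoids_1432 xs"
    using not_cyc_avoids_1432_if_contains_1432 cyc_avoids_1432_rotate by (metis distinct_rotate)
next
  assume "\<not> cyc_avoids_1432 xs"
  with assms show "cyc_contains_1432 (cyc xs)"
    unfolding cyc_contains_1432_def by (rule rotation_contains_1432_if_not_cyc_avoids)
qed

lemma cyc_conv_range: "xs \<noteq> [] \<Longrightarrow> cyc xs = range (\<lambda>k. rotate k xs)"
  unfolding cyc_def by (auto intro: rotate_conv_mod simp del: rotate_conv_mod)

lemma cyc_rotate:
  assumes "xs \<noteq> []"
  shows "cyc (rotate i xs) = cyc xs"
proof -
  have "rotate k xs = rotate (k + (length xs - 1) * i) (rotate i xs)" for k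
  proof -
    have "k + (length xs - 1) * i + i = k + length xs * i"
      using assms by (cases "length xs") (auto simp: algebra_simps)
    then show ?thesis by (metis rotate_rotate rotate_conv_mod mod_mult_self2)
  qed
  then show ?thesis using assms by (auto simp: cyc_conv_range rotate_rotate)
qed

definition rooted_perms :: "nat \<Rightarrow> nat list set" where
  "rooted_perms n = {xs \<in> perms n. hd xs = 1}"

lemma rooted_perms_iff: "xs \<in> rooted_perms n \<longleftrightarrow> distinct xs \<and> set xs = {1..n} \<and> hd xs = 1"
  unfolding rooted_perms_def perms_def by simp

lemma finite_perms: "finite (perms n)"
proof -
  have "perms n \<subseteq> {xs. set xs \<subseteq> {1..n} \<and> length xs \<le> n}"
    unfolding perms_def using distinct_card by fastforce
  then show ?thesis using finite_lists_length_le[of "{1..n}" n] finite_subset by blast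
qed

lemma finite_rooted_perms: "finite (rooted_perms n)"
  unfolding rooted_perms_def using finite_perms by simp

lemma inj_on_cyc_rooted_perms: "inj_on cyc (rooted_perms n)"
proof
  fix xs ys assume xs: "xs \<in> rooted_perms n" and ys: "ys \<in> rooted_perms n" and "cyc xs = cyc ys"
  show "xs = ys"
  proof (cases "xs = []")
    case True
    with xs ys show ?thesis by (simp add: rooted_perms_iff)
  next
    case False
    have "ys \<in> cyc ys" unfolding cyc_def using False xs ys by (force simp: rooted_perms_iff)
    with \<open>cyc xs = cyc ys\<close> obtain k where k: "k < length xs" "ys = rotate k xs"
      unfolding cyc_def by auto
    with False have "hd ys = xs ! k" by (simp add: hd_rotate_conv_nth)
    with False xs ys have "xs ! k = xs ! 0" by (simp add: rooted_perms_iff hd_conv_nth)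
    with k xs False have "k = 0" by (simp add: rooted_perms_iff nth_eq_iff_index_eq)
    with k show ?thesis by simp
  qed
qed

lemma Av_1432_eq_image:
  assumes "1 \<le> n"
  shows "Av_1432 n = cyc ` {xs \<in> rooted_perms n. cyc_avoids_1432 xs}"
proof (intro set_eqI iffI)
  fix C assume "C \<in> Av_1432 n"
  then obtain xs where xs: "xs \<in> perms n" "C = cyc xs" "\<not> cyc_contains_1432 C"
    unfolding Av_1432_def cyc_perms_def by auto
  with assms have "1 \<in> set xs" "xs \<noteq> []" unfolding perms_def by auto
  then obtain i where i: "i < length xs" "xs ! i = 1" by (auto simp: in_set_conv_nth)
  define ys where "ys = rotate i xs"
  have "ys \<in> rooted_perms n"
    using xs i \<open>xs \<noteq> []\<close> unfolding ys_def rooted_perms_def perms_def by (simp add: hd_rotate_conv_nth)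
  moreover have "cyc ys = C" unfolding ys_def using cyc_rotate \<open>xs \<noteq> []\<close> xs by simp
  ultimately show "C \<in> cyc ` {xs \<in> rooted_perms n. cyc_avoids_1432 xs}"
    using cyc_contains_1432_iff xs(3) by (force simp: rooted_perms_iff)
next
  fix C assume "C \<in> cyc ` {xs \<in> rooted_perms n. cyc_avoids_1432 xs}"
  then show "C \<in> Av_1432 n"
    unfolding Av_1432_def cyc_perms_def rooted_perms_def perms_def
    using cyc_contains_1432_iff by auto
qed

lemma card_Av_1432:
  assumes "1 \<le> n"
  shows "card (Av_1432 n) = card {xs \<in> rooted_perms n. cyc_avoids_1432 xs}"
proof -
  have "inj_on cyc {xs \<in> rooted_perms n. cyc_avoids_1432 xs}"
    by (rule inj_on_subset[OF inj_on_cyc_rooted_perms]) auto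
  then show ?thesis by (simp add: Av_1432_eq_image[OF assms] card_image)
qed

section \<open>Counting by active entries\<close>

lemma insert_after_rooted_perms:
  assumes "r \<in> rooted_perms m" "u \<in> set r"
  shows "insert_after u (Suc m) r \<in> rooted_perms (Suc m)"
proof -
  have "r \<noteq> []" using assms(2) by auto
  with assms show ?thesis
    by (auto simp: rooted_perms_iff distinct_insert_after set_insert_after hd_insert_after)
qed

lemma rooted_perms_SucE:
  assumes "1 \<le> m" "s \<in> rooted_perms (Suc m)"
  obtains r u where "r \<in> rooted_perms m" "u \<in> set r"
    "r = removeAll (Suc m) s" "s = insert_after u (Suc m) r"
proof -
  have s: "distinct s" "set s = {1..Suc m}" "hd s = 1"
    using assms(2) by (simp_all add: rooted_perms_iff)
  then obtain t where "s = 1 # t" by (cases s) auto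
  moreover have "set (removeAll (Suc m) s) = {1..m}" using s(2) by (simp add: atLeastAtMostSuc_conv)
  ultimately have "removeAll (Suc m) s \<in> rooted_perms m"
    using s assms(1) by (simp add: rooted_perms_iff distinct_removeAll)
  moreover have "Suc m \<in> set s" "hd s \<noteq> Suc m" using s assms(1) by auto
  then obtain u where "u \<in> set (removeAll (Suc m) s)"
    "s = insert_after u (Suc m) (removeAll (Suc m) s)"
    using insert_after_removeAll[OF \<open>distinct s\<close>] by blast
  ultimately show ?thesis using that by blast
qed

lemma max_insertion_rooted_perms: "r \<in> rooted_perms m \<Longrightarrow> u \<in> set r \<Longrightarrow> max_insertion r u (Suc m)"
  unfolding max_insertion_def by (auto simp: rooted_perms_iff)

lemma active_if_le_Suc:
  assumes "xs \<in> rooted_perms M" "M \<le> Suc v"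
  shows "active xs v"
proof -
  have "y \<le> Suc v" if "y \<in> set xs" for y
    using assms that by (auto simp: rooted_perms_iff)
  then show ?thesis unfolding active_def by force
qed

(* Since active entries are upward closed, this says that v is the least active entry;
  v = 1 is treated separately because 0 is not an entry. *)
definition least_active :: "nat list \<Rightarrow> nat \<Rightarrow> bool" where
  "least_active xs v \<longleftrightarrow> active xs v \<and> (v = 1 \<or> \<not> active xs (v - 1))"

lemma least_active_insert_after_iff:
  assumes r: "r \<in> rooted_perms m" and "u \<in> set r" "active r u" and v: "1 \<le> v" "v \<le> m"
  shows "least_active (insert_after u (Suc m) r) v \<longleftrightarrow>
    active r v \<and> u = (if v \<noteq> 1 \<and> active r (v - 1) then v - 1 else m)"
proof -
  interpret max_insertion r u "Suc m"
    using max_insertion_rooted_perms[OF r \<open>u \<in> set r\<close>] .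
  have active_s: "active s w \<longleftrightarrow> active r w \<and> (u = m \<or> u < w)" if "w \<in> set r" for w
    using active_s_iff_max[OF \<open>active r u\<close> that] r v by (simp add: rooted_perms_iff)
  have "v \<in> set r" and v1: "v \<noteq> 1 \<Longrightarrow> v - 1 \<in> set r" and "1 \<le> u"
    using r v \<open>u \<in> set r\<close> by (auto simp: rooted_perms_iff)
  show ?thesis
  proof (cases "v \<noteq> 1 \<and> active r (v - 1)")
    case True
    with v1 have "least_active s v \<longleftrightarrow> active r v \<and> (u = m \<or> u < v) \<and> \<not> (u = m \<or> u < v - 1)"
      unfolding least_active_def using active_s \<open>v \<in> set r\<close> by auto
    with True v show ?thesis by auto
  next
    case False
    have "active r (v - 1)" if "u < v"
      using active_mono[OF distinct_r \<open>active r u\<close>] that \<open>1 \<le> u\<close> v1 by auto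
    with False v1 show ?thesis
      unfolding least_active_def using active_s \<open>v \<in> set r\<close> \<open>1 \<le> u\<close> by auto
  qed
qed

definition active_count :: "nat \<Rightarrow> nat \<Rightarrow> nat" where
  "active_count m v = card {xs \<in> rooted_perms m. cyc_avoids_1432 xs \<and> active xs v}"

(* Deleting Suc m is a bijection onto the avoiders of size m in which v is active: the
  inverse inserts Suc m after site r, the only position that makes v least active. *)
lemma card_least_active_Suc:
  assumes "1 \<le> v" "v \<le> m"
  shows "card {s \<in> rooted_perms (Suc m). cyc_avoids_1432 s \<and> least_active s v} = active_count m v"
proof -
  let ?S = "{s \<in> rooted_perms (Suc m). cyc_avoids_1432 s \<and> least_active s v}"
  let ?R = "{r \<in> rooted_perms m. cyc_avoids_1432 r \<and> active r v}"
  define site where "site r = (if v \<noteq> 1 \<and> active r (v - 1) then v - 1 else m)" for r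
  define extend where "extend r = insert_after (site r) (Suc m) r" for r
  have site: "site r \<in> set r" "active r (site r)" if "r \<in> rooted_perms m" for r
    using that assms active_if_le_Suc[OF that, of m] by (auto simp: site_def rooted_perms_iff)
  have avoids_iff: "cyc_avoids_1432 (insert_after u (Suc m) r) \<longleftrightarrow> cyc_avoids_1432 r \<and> active r u"
    if "r \<in> rooted_perms m" "u \<in> set r" for r u
    using max_insertion.cyc_avoids_1432_s_iff[OF max_insertion_rooted_perms[OF that]] .
  have least_iff: "least_active (insert_after u (Suc m) r) v \<longleftrightarrow> active r v \<and> u = site r"
    if "r \<in> rooted_perms m" "u \<in> set r" "active r u" for r u
    using least_active_insert_after_iff[OF that assms] unfolding site_def .
  have removal: "removeAll (Suc m) s \<in> ?R \<and> extend (removeAll (Suc m) s) = s" if "s \<in> ?S" for s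
  proof -
    have "1 \<le> m" "s \<in> rooted_perms (Suc m)" using assms that by simp_all
    then obtain r u where r: "r \<in> rooted_perms m" "u \<in> set r"
      and rs: "r = removeAll (Suc m) s" "s = insert_after u (Suc m) r"
      by (rule rooted_perms_SucE)
    from that have "cyc_avoids_1432 s" "least_active s v" by simp_all
    with r rs(2) have "cyc_avoids_1432 r" "active r u" using avoids_iff by simp_all
    with r rs(2) \<open>least_active s v\<close> have "active r v" "u = site r" using least_iff by simp_all
    with r rs(2) \<open>cyc_avoids_1432 r\<close> show ?thesis unfolding extend_def rs(1)[symmetric] by simp
  qed
  have extension: "extend r \<in> ?S" if "r \<in> ?R" for r
  proof -
    from that have r: "r \<in> rooted_perms m" "cyc_avoids_1432 r" "active r v" by auto
    with site[OF r(1)] show ?thesis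
      unfolding extend_def using avoids_iff least_iff insert_after_rooted_perms by simp
  qed
  have "bij_betw (removeAll (Suc m)) ?S ?R"
  proof (rule bij_betw_byWitness[where f' = extend])
    show "\<forall>r\<in>?R. removeAll (Suc m) (extend r) = r"
      by (auto simp: extend_def rooted_perms_iff removeAll_insert_after)
    show "\<forall>s\<in>?S. extend (removeAll (Suc m) s) = s" using removal by blast
    show "removeAll (Suc m) ` ?S \<subseteq> ?R" using removal by blast
    show "extend ` ?R \<subseteq> ?S" using extension by blast
  qed
  then show ?thesis unfolding active_count_def by (rule bij_betw_same_card)
qed

lemma active_count_Suc_1: "1 \<le> m \<Longrightarrow> active_count (Suc m) 1 = active_count m 1"
  using card_least_active_Suc[of 1 m] unfolding active_count_def least_active_def by simp

lemma active_count_Suc: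
  assumes "2 \<le> v" "v \<le> m"
  shows "active_count (Suc m) v = active_count (Suc m) (v - 1) + active_count m v"
proof -
  let ?A = "\<lambda>w. {s \<in> rooted_perms (Suc m). cyc_avoids_1432 s \<and> active s w}"
  let ?L = "{s \<in> rooted_perms (Suc m). cyc_avoids_1432 s \<and> least_active s v}"
  have "active s v" if "s \<in> rooted_perms (Suc m)" "active s (v - 1)" for s
    using that assms active_mono[OF _ that(2), of v] by (auto simp: rooted_perms_iff)
  with assms have "?A v = ?A (v - 1) \<union> ?L" "?A (v - 1) \<inter> ?L = {}"
    unfolding least_active_def by auto
  then have "card (?A v) = card (?A (v - 1)) + card ?L"
    using finite_rooted_perms by (simp add: card_Un_disjoint)
  with assms show ?thesis
    using card_least_active_Suc[of v m] unfolding active_count_def by simp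
qed

lemma active_count_if_le_Suc:
  "M \<le> Suc v \<Longrightarrow> active_count M v = card {xs \<in> rooted_perms M. cyc_avoids_1432 xs}"
  unfolding active_count_def using active_if_le_Suc by metis

lemma active_count_1_1: "active_count 1 1 = 1"
proof -
  have "rooted_perms 1 = {[1]}"
  proof
    show "rooted_perms 1 \<subseteq> {[1]}"
    proof
      fix xs assume "xs \<in> rooted_perms 1"
      then have "distinct xs" "set xs = {1}" by (auto simp: rooted_perms_iff)
      then have "length xs = 1" using distinct_card by fastforce
      with \<open>set xs = {1}\<close> show "xs \<in> {[1]}" by (cases xs) auto
    qed
  qed (simp add: rooted_perms_iff)
  moreover have "cyc_avoids_1432 [1]" by (simp add: cyc_avoids_1432_def cyc_succ_def)
  ultimately have "{xs \<in> rooted_perms 1. cyc_avoids_1432 xs} = {[1]}" by blast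
  then show ?thesis using active_count_if_le_Suc[of 1 1] by simp
qed

(* The right-hand side minus (p + q + 1 choose q) is the ballot number
  (p + q choose q) - (p + q choose (q - 1)); it is stated additively to avoid truncated
  subtraction. *)
lemma ballot_table_closed_form:
  fixes B :: "nat \<Rightarrow> nat \<Rightarrow> nat"
  assumes first_column: "\<And>p. B p 0 = 1"
    and pascal: "\<And>p q. q < p \<Longrightarrow> B (Suc p) (Suc q) = B (Suc p) q + B p (Suc q)"
    and diagonal: "\<And>p. B (Suc p) (Suc p) = B (Suc p) p"
  shows "q \<le> p \<Longrightarrow> B p q + (p + q + 1 choose q) = 2 * (p + q choose q)"
proof (induction p arbitrary: q)
  case 0
  then show ?case using first_column by simp
next
  case (Suc p)
  note previous_row = Suc.IH
  show ?case
    using Suc.prems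
  proof (induction q)
    case 0
    then show ?case using first_column by simp
  next
    case (Suc q)
    show ?case
    proof (cases "q < p")
      case True
      with Suc previous_row[of "Suc q"] show ?thesis by (simp add: pascal)
    next
      case False
      with Suc.prems have "q = p" by simp
      have "Suc (p + p) choose Suc p = Suc (p + p) choose p"
        using binomial_symmetric[of "Suc p" "Suc (p + p)"] by simp
      with Suc.IH show ?thesis unfolding \<open>q = p\<close> diagonal by simp
    qed
  qed
qed

lemma active_count_closed_form:
  "q \<le> p \<Longrightarrow> active_count (Suc p) (Suc q) + (p + q + 1 choose q) = 2 * (p + q choose q)"
proof (rule ballot_table_closed_form[where B = "\<lambda>p q. active_count (Suc p) (Suc q)"])
  show "active_count (Suc p) (Suc 0) = 1" for p
  proof (induction p)
    case 0
    show ?case using active_count_1_1 by simp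
  next
    case (Suc p)
    then show ?case using active_count_Suc_1[of "Suc p"] by simp
  qed
  show "active_count (Suc (Suc p)) (Suc (Suc q)) =
      active_count (Suc (Suc p)) (Suc q) + active_count (Suc p) (Suc (Suc q))" if "q < p" for p q
    using active_count_Suc[of "Suc (Suc q)" "Suc p"] that by simp
  show "active_count (Suc (Suc p)) (Suc (Suc p)) = active_count (Suc (Suc p)) (Suc p)" for p
    by (simp add: active_count_if_le_Suc)
qed

theorem theorem5p10:
  fixes n :: nat
  assumes "n \<ge> 1"
  shows "real (card (Av_1432 n)) = catalan (n - 1)"
proof -
  obtain p where n: "n = Suc p" using assms by (cases n) auto
  have "card (Av_1432 n) = active_count (Suc p) (Suc p)"
    using card_Av_1432[OF assms] by (simp add: n active_count_if_le_Suc)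
  moreover have "active_count (Suc p) (Suc p) + (2 * p + 1 choose p) = 2 * (2 * p choose p)"
    using active_count_closed_form[of p p] by (simp add: mult_2)
  moreover have "Suc p * (2 * p + 1 choose p) = (2 * p + 1) * (2 * p choose p)"
    using binomial_absorb_comp[of "2 * p + 1" p] by simp
  ultimately have "Suc p * card (Av_1432 n) + (2 * p + 1) * (2 * p choose p) =
      Suc p * (2 * (2 * p choose p))"
    by (metis add_mult_distrib2)
  then have "Suc p * card (Av_1432 n) = 2 * p choose p"
    by (simp add: algebra_simps)
  then have "real (Suc p) * real (card (Av_1432 n)) = real (2 * p choose p)"
    by (metis of_nat_mult)
  then show ?thesis unfolding catalan_def n by (simp add: field_simps)
qed

end
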